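(* Let $X$ and $\Lambda$ be nonempty sets, $f: X\to\mathbb{R}$ a function and $(f_\lambda)_{\lambda\in\Lambda}$ a family of real-valued functions on $X$ such that the family $(f_\lambda-f)_{\lambda\in\Lambda}$ is infsup-convex on $X$. Assume that $(f_\lambda(x))_{\lambda\in\Lambda}\in\ell^\infty(\Lambda)$ for every $x\in X$, and that $f(x)\le\sup_{\lambda\in\Lambda}f_\lambda(x)$ for every $x\in X$. Then there exists $\Phi\in\Delta_\Lambda$ such that $f(x)\le\Phi((f_\lambda(x))_{\lambda\in\Lambda})$ for every $x\in X$.
   Context: For a nonempty set $\Lambda$, $\ell^\infty(\Lambda)$ is the real Banach space of bounded real-valued functions on $\Lambda$ (sup-norm), $\ell^\infty(\Lambda)^*$ its topological dual, and $\Delta_\Lambda:=\{\Phi\in\ell^\infty(\Lambda)^*:\ \Phi(\varphi)\le\sup_{\lambda\in\Lambda}\varphi(\lambda)\ \forall\varphi\in\ell^\infty(\Lambda)\}$. Let $\Delta_m:=\{(t_1,\dots,t_m)\in\mathbb{R}^m: t_j\ge0,\ \sum_j t_j=1\}$. A family $(g_\lambda)_{\lambda\in\Lambda}$ of real-valued functions on a nonempty set $X$ is infsup-convex on $X$ if for all $m\ge1$, $\mathbf{t}\in\Delta_m$ and $x_1,\dots,x_m\in X$: $\inf_{x\in X}\sup_{\lambda\in\Lambda}g_\lambda(x)\le\sup_{\lambda\in\Lambda}\sum_{j=1}^m t_j g_\lambda(x_j)$. *)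

theory Defs
  imports "HOL-Analysis.Analysis"
begin

text \<open>The nonempty sets X and Lambda are modelled by the (nonempty) types 'x and 'l.\<close>

definition linf :: "('l \<Rightarrow> real) set" where
  "linf = {\<phi>. bounded (range \<phi>)}"

text \<open>Topological dual of ell-infinity: linear functionals on linf that are bounded
  w.r.t. the sup-norm (only their values on linf matter).\<close>
definition linf_dual :: "(('l \<Rightarrow> real) \<Rightarrow> real) set" where
  "linf_dual = {\<Phi>.
     (\<forall>\<phi>\<in>linf. \<forall>\<psi>\<in>linf. \<forall>a b. \<Phi> (\<lambda>l. a * \<phi> l + b * \<psi> l) = a * \<Phi> \<phi> + b * \<Phi> \<psi>) \<and>
     (\<exists>C. \<forall>\<phi>\<in>linf. \<bar>\<Phi> \<phi>\<bar> \<le> C * (SUP l. \<bar>\<phi> l\<bar>))}"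

definition Delta_L :: "(('l \<Rightarrow> real) \<Rightarrow> real) set" where
  "Delta_L = {\<Phi>\<in>linf_dual. \<forall>\<phi>\<in>linf. \<Phi> \<phi> \<le> (SUP l. \<phi> l)}"

definition std_simplex :: "nat \<Rightarrow> (nat \<Rightarrow> real) set" where
  "std_simplex m = {t. (\<forall>j<m. 0 \<le> t j) \<and> (\<Sum>j<m. t j) = 1}"

text \<open>Infsup-convexity of a family g (g l x = g_lambda(x)); inf/sup taken in the
  extended reals so that infinite values are handled as in the paper.\<close>
definition infsup_convex :: "('l \<Rightarrow> 'x \<Rightarrow> real) \<Rightarrow> bool" where
  "infsup_convex g \<longleftrightarrow>
     (\<forall>m\<ge>1. \<forall>t\<in>std_simplex m. \<forall>xs :: nat \<Rightarrow> 'x.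
        (INF x. SUP l. ereal (g l x)) \<le> (SUP l. ereal (\<Sum>j<m. t j * g l (xs j))))"

end

theory Submission
  imports Defs
begin

text \<open>
  Put g x = F(\<cdot>, x) - f x and let K be the convex cone generated by the functions g x.
  Infsup-convexity together with sup g x \<ge> 0 gives sup k \<ge> 0 for every k \<in> K, and this makes
  P \<phi> = inf {sup (\<phi> + k) | k \<in> K} a sublinear functional on bounded functions with P \<le> sup.
  By the Hahn--Banach theorem, in the form "a minimal sublinear functional below P, which exists
  by Zorn's lemma, is linear", some linear \<Phi> satisfies \<Phi> \<le> P \<le> sup, so \<Phi> \<in> Delta_L. Finally
  -\<Phi> (g x) = \<Phi> (-g x) \<le> P (-g x) \<le> sup (-g x + g x) = 0, that is f x \<le> \<Phi> (F(\<cdot>, x)).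
\<close>

lemma cINF_add_greatest:
  fixes f g :: "'a \<Rightarrow> real"
  assumes "A \<noteq> {}" "B \<noteq> {}" "\<And>a b. a \<in> A \<Longrightarrow> b \<in> B \<Longrightarrow> c \<le> f a + g b"
  shows "c \<le> (INF a\<in>A. f a) + (INF b\<in>B. g b)"
proof -
  have "c - g b \<le> (INF a\<in>A. f a)" if "b \<in> B" for b
    using assms that by (intro cINF_greatest) (auto simp: algebra_simps)
  then have "c - (INF a\<in>A. f a) \<le> (INF b\<in>B. g b)"
    using assms(2) by (intro cINF_greatest) (auto simp: algebra_simps)
  then show ?thesis by simp
qed

lemma cINF_mult_pos:
  fixes f :: "'a \<Rightarrow> real"
  assumes "0 < c" "A \<noteq> {}" "bdd_below (f ` A)"
  shows "(INF a\<in>A. c * f a) = c * (INF a\<in>A. f a)"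
proof (rule antisym)
  obtain M where "\<And>a. a \<in> A \<Longrightarrow> M \<le> f a" using assms(3) by (auto simp: bdd_below_def)
  then have "bdd_below ((\<lambda>a. c * f a) ` A)"
    using assms(1) by (intro bdd_belowI2[where m="c * M"]) simp
  then have "(INF a\<in>A. c * f a) / c \<le> f a" if "a \<in> A" for a
    using assms(1) cINF_lower[OF _ that] by (simp add: divide_le_eq mult.commute)
  then have "(INF a\<in>A. c * f a) / c \<le> (INF a\<in>A. f a)"
    using assms(2) by (intro cINF_greatest)
  then show "(INF a\<in>A. c * f a) \<le> c * (INF a\<in>A. f a)"
    using assms(1) by (simp add: divide_le_eq mult.commute)
next
  show "c * (INF a\<in>A. f a) \<le> (INF a\<in>A. c * f a)"
    using assms by (intro cINF_greatest) (auto intro: cINF_lower)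
qed

lemma cSUP_mult_pos:
  fixes f :: "'a \<Rightarrow> real"
  assumes "0 < c" "A \<noteq> {}" "bdd_above (f ` A)"
  shows "(SUP a\<in>A. c * f a) = c * (SUP a\<in>A. f a)"
proof (rule antisym)
  show "(SUP a\<in>A. c * f a) \<le> c * (SUP a\<in>A. f a)"
    using assms by (intro cSUP_least) (auto intro: cSUP_upper)
next
  obtain M where "\<And>a. a \<in> A \<Longrightarrow> f a \<le> M" using assms(3) by (auto simp: bdd_above_def)
  then have "bdd_above ((\<lambda>a. c * f a) ` A)"
    using assms(1) by (intro bdd_aboveI2[where M="c * M"]) simp
  then have "f a \<le> (SUP a\<in>A. c * f a) / c" if "a \<in> A" for a
    using assms(1) cSUP_upper[OF that] by (simp add: le_divide_eq mult.commute)
  then have "(SUP a\<in>A. f a) \<le> (SUP a\<in>A. c * f a) / c"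
    using assms(2) by (intro cSUP_least)
  then show "c * (SUP a\<in>A. f a) \<le> (SUP a\<in>A. c * f a)"
    using assms(1) by (simp add: le_divide_eq mult.commute)
qed

locale function_subspace =
  fixes V :: "('i \<Rightarrow> real) set"
  assumes zero_mem: "(\<lambda>i. 0) \<in> V"
    and add_mem: "\<phi> \<in> V \<Longrightarrow> \<psi> \<in> V \<Longrightarrow> (\<lambda>i. \<phi> i + \<psi> i) \<in> V"
    and scale_mem: "\<phi> \<in> V \<Longrightarrow> (\<lambda>i. c * \<phi> i) \<in> V"
begin

lemma neg_mem: "\<phi> \<in> V \<Longrightarrow> (\<lambda>i. - \<phi> i) \<in> V"
  using scale_mem[of \<phi> "-1"] by simp

definition sublinear :: "(('i \<Rightarrow> real) \<Rightarrow> real) \<Rightarrow> bool" where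
  "sublinear q \<longleftrightarrow> (\<forall>\<phi>\<in>V. \<forall>\<psi>\<in>V. q (\<lambda>i. \<phi> i + \<psi> i) \<le> q \<phi> + q \<psi>) \<and>
     (\<forall>\<phi>\<in>V. \<forall>c>0. q (\<lambda>i. c * \<phi> i) = c * q \<phi>)"

definition linear_functional :: "(('i \<Rightarrow> real) \<Rightarrow> real) \<Rightarrow> bool" where
  "linear_functional \<Phi> \<longleftrightarrow>
     (\<forall>\<phi>\<in>V. \<forall>\<psi>\<in>V. \<forall>a b. \<Phi> (\<lambda>i. a * \<phi> i + b * \<psi> i) = a * \<Phi> \<phi> + b * \<Phi> \<psi>)"

lemma linear_functional_add:
  assumes "linear_functional \<Phi>" "\<phi> \<in> V" "\<psi> \<in> V"
  shows "\<Phi> (\<lambda>i. \<phi> i + \<psi> i) = \<Phi> \<phi> + \<Phi> \<psi>"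
  using assms(1)[unfolded linear_functional_def, rule_format, OF assms(2,3), of 1 1] by simp

lemma linear_functional_scale:
  assumes "linear_functional \<Phi>" "\<phi> \<in> V"
  shows "\<Phi> (\<lambda>i. c * \<phi> i) = c * \<Phi> \<phi>"
  using assms(1)[unfolded linear_functional_def, rule_format, OF assms(2,2), of c 0] by simp

lemma sublinear_add: "sublinear q \<Longrightarrow> \<phi> \<in> V \<Longrightarrow> \<psi> \<in> V \<Longrightarrow> q (\<lambda>i. \<phi> i + \<psi> i) \<le> q \<phi> + q \<psi>"
  unfolding sublinear_def by blast

lemma sublinear_pos_hom: "sublinear q \<Longrightarrow> \<phi> \<in> V \<Longrightarrow> 0 < c \<Longrightarrow> q (\<lambda>i. c * \<phi> i) = c * q \<phi>"
  unfolding sublinear_def by blast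

lemma sublinear_zero:
  assumes "sublinear q" shows "q (\<lambda>i. 0) = 0"
  using sublinear_pos_hom[OF assms zero_mem, of 2] by simp

lemma sublinear_nonneg_hom: "sublinear q \<Longrightarrow> \<phi> \<in> V \<Longrightarrow> 0 \<le> c \<Longrightarrow> q (\<lambda>i. c * \<phi> i) = c * q \<phi>"
  by (cases "c = 0") (simp_all add: sublinear_zero sublinear_pos_hom)

lemma sublinear_neg_le:
  assumes "sublinear q" "\<phi> \<in> V" shows "- q (\<lambda>i. - \<phi> i) \<le> q \<phi>"
  using sublinear_add[OF assms neg_mem[OF assms(2)]] sublinear_zero[OF assms(1)] by simp

lemma sublinear_cong:
  assumes "sublinear q" "\<And>\<phi>. \<phi> \<in> V \<Longrightarrow> q' \<phi> = q \<phi>" shows "sublinear q'"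
  using assms unfolding sublinear_def by (simp add: add_mem scale_mem)

lemma odd_sublinear_imp_linear:
  assumes q: "sublinear q" and odd: "\<And>\<phi>. \<phi> \<in> V \<Longrightarrow> q (\<lambda>i. - \<phi> i) = - q \<phi>"
  shows "linear_functional q"
proof -
  have add: "q (\<lambda>i. \<phi> i + \<psi> i) = q \<phi> + q \<psi>" if "\<phi> \<in> V" "\<psi> \<in> V" for \<phi> \<psi>
    using sublinear_add[OF q that] sublinear_add[OF q add_mem[OF that] neg_mem[OF that(2)]]
      odd[OF that(2)] by simp
  have hom: "q (\<lambda>i. c * \<phi> i) = c * q \<phi>" if "\<phi> \<in> V" for \<phi> c
  proof (cases "0 \<le> c")
    case False
    then have "q (\<lambda>i. - ((- c) * \<phi> i)) = c * q \<phi>"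
      using odd[OF scale_mem[OF that]] sublinear_nonneg_hom[OF q that, of "- c"] by simp
    then show ?thesis by simp
  qed (use sublinear_nonneg_hom[OF q that] in simp)
  show ?thesis
    unfolding linear_functional_def by (simp add: add hom scale_mem)
qed

lemma bdd_below_dominated:
  assumes "\<forall>q\<in>D. sublinear q" "\<forall>q\<in>D. \<forall>\<phi>\<in>V. q \<phi> \<le> p \<phi>" "\<phi> \<in> V"
  shows "bdd_below ((\<lambda>q. q \<phi>) ` D)"
proof (rule bdd_belowI2)
  fix q assume "q \<in> D"
  then show "- p (\<lambda>i. - \<phi> i) \<le> q \<phi>"
    using assms sublinear_neg_le[of q \<phi>] neg_mem[of \<phi>] by fastforce
qed

lemma sublinear_INF_chain:
  assumes ne: "D \<noteq> {}" and sub: "\<forall>q\<in>D. sublinear q" and dom: "\<forall>q\<in>D. \<forall>\<phi>\<in>V. q \<phi> \<le> p \<phi>"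
    and chain: "\<And>q1 q2. q1 \<in> D \<Longrightarrow> q2 \<in> D \<Longrightarrow> (\<forall>\<phi>\<in>V. q1 \<phi> \<le> q2 \<phi>) \<or> (\<forall>\<phi>\<in>V. q2 \<phi> \<le> q1 \<phi>)"
  shows "sublinear (\<lambda>\<phi>. INF q\<in>D. q \<phi>)"
  unfolding sublinear_def
proof (intro conjI ballI allI impI)
  note bdd = bdd_below_dominated[OF sub dom]
  fix \<phi> \<psi> assume \<phi>: "\<phi> \<in> V" and \<psi>: "\<psi> \<in> V"
  have "(INF q\<in>D. q (\<lambda>i. \<phi> i + \<psi> i)) \<le> q1 \<phi> + q2 \<psi>" if q12: "q1 \<in> D" "q2 \<in> D" for q1 q2
  proof -
    \<comment> \<open>the smaller of two comparable functionals witnesses the bound\<close>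
    obtain q where "q \<in> D" "q \<phi> \<le> q1 \<phi>" "q \<psi> \<le> q2 \<psi>"
      using chain[OF q12] q12 \<phi> \<psi> by blast
    then show ?thesis
      using cINF_lower[OF bdd[OF add_mem[OF \<phi> \<psi>]]] sublinear_add[of q \<phi> \<psi>] sub \<phi> \<psi>
      by (meson add_mono order_trans)
  qed
  then show "(INF q\<in>D. q (\<lambda>i. \<phi> i + \<psi> i)) \<le> (INF q\<in>D. q \<phi>) + (INF q\<in>D. q \<psi>)"
    by (rule cINF_add_greatest[OF ne ne])
next
  fix \<phi> and c :: real assume \<phi>: "\<phi> \<in> V" and c: "0 < c"
  have "(INF q\<in>D. q (\<lambda>i. c * \<phi> i)) = (INF q\<in>D. c * q \<phi>)"
    using sub sublinear_pos_hom[OF _ \<phi> c] by (intro INF_cong) auto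
  also have "\<dots> = c * (INF q\<in>D. q \<phi>)"
    using c ne bdd_below_dominated[OF sub dom \<phi>] by (rule cINF_mult_pos)
  finally show "(INF q\<in>D. q (\<lambda>i. c * \<phi> i)) = c * (INF q\<in>D. q \<phi>)" .
qed

definition directional_inf :: "(('i \<Rightarrow> real) \<Rightarrow> real) \<Rightarrow> ('i \<Rightarrow> real) \<Rightarrow> ('i \<Rightarrow> real) \<Rightarrow> real" where
  "directional_inf q y x = (INF t\<in>{0..}. q (\<lambda>i. x i + t * y i) - t * q y)"

lemma bdd_below_directional:
  assumes q: "sublinear q" and y: "y \<in> V" and x: "x \<in> V"
  shows "bdd_below ((\<lambda>t. q (\<lambda>i. x i + t * y i) - t * q y) ` {0..})"
proof (rule bdd_belowI2)
  fix t :: real assume t: "t \<in> {0..}"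
  have "(\<lambda>i. (x i + t * y i) + - x i) = (\<lambda>i. t * y i)" by simp
  then have "t * q y \<le> q (\<lambda>i. x i + t * y i) + q (\<lambda>i. - x i)"
    using sublinear_add[OF q add_mem[OF x scale_mem[OF y, of t]] neg_mem[OF x]]
      sublinear_nonneg_hom[OF q y, of t] t by simp
  then show "- q (\<lambda>i. - x i) \<le> q (\<lambda>i. x i + t * y i) - t * q y" by simp
qed

lemma directional_inf_le:
  "sublinear q \<Longrightarrow> y \<in> V \<Longrightarrow> x \<in> V \<Longrightarrow> 0 \<le> t \<Longrightarrow>
    directional_inf q y x \<le> q (\<lambda>i. x i + t * y i) - t * q y"
  unfolding directional_inf_def by (rule cINF_lower[OF bdd_below_directional]) auto

lemma sublinear_directional_inf:
  assumes q: "sublinear q" and y: "y \<in> V"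
  shows "sublinear (directional_inf q y)"
proof -
  define T where "T x t = q (\<lambda>i. x i + t * y i) - t * q y" for x t
  have shift_mem: "(\<lambda>i. x i + t * y i) \<in> V" if "x \<in> V" for x t
    using add_mem[OF that scale_mem[OF y]] .
  show ?thesis
    unfolding sublinear_def
  proof (intro conjI ballI allI impI)
    fix x1 x2 assume x1: "x1 \<in> V" and x2: "x2 \<in> V"
    have "directional_inf q y (\<lambda>i. x1 i + x2 i) \<le> T x1 t1 + T x2 t2"
      if "t1 \<in> {0..}" "t2 \<in> {0..}" for t1 t2
    proof -
      have "(\<lambda>i. (x1 i + x2 i) + (t1 + t2) * y i) = (\<lambda>i. (x1 i + t1 * y i) + (x2 i + t2 * y i))"
        by (simp add: algebra_simps)
      then have "T (\<lambda>i. x1 i + x2 i) (t1 + t2) \<le> T x1 t1 + T x2 t2"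
        unfolding T_def using sublinear_add[OF q shift_mem[OF x1] shift_mem[OF x2], of t1 t2]
        by (simp add: algebra_simps)
      then show ?thesis
        using directional_inf_le[OF q y add_mem[OF x1 x2], of "t1 + t2"] that by (simp add: T_def)
    qed
    then show "directional_inf q y (\<lambda>i. x1 i + x2 i) \<le> directional_inf q y x1 + directional_inf q y x2"
      unfolding directional_inf_def[of q y x1] directional_inf_def[of q y x2] T_def
      by (intro cINF_add_greatest) auto
  next
    fix x and c :: real assume x: "x \<in> V" and c: "0 < c"
    have scale: "T (\<lambda>i. c * x i) (c * t) = c * T x t" for t
    proof -
      have "(\<lambda>i. c * x i + c * t * y i) = (\<lambda>i. c * (x i + t * y i))" by (simp add: algebra_simps)
      then show ?thesis
        unfolding T_def using sublinear_pos_hom[OF q shift_mem[OF x, of t] c] by (simp add: algebra_simps)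
    qed
    have "(\<lambda>t. c * t) ` {0..} = {0..}"
      using c by (auto simp: image_iff intro!: bexI[where x="_ / c"])
    then have "T (\<lambda>i. c * x i) ` {0..} = T (\<lambda>i. c * x i) ` (\<lambda>t. c * t) ` {0..}" by simp
    also have "\<dots> = (\<lambda>t. c * T x t) ` {0..}" unfolding image_image scale ..
    finally have "directional_inf q y (\<lambda>i. c * x i) = (INF t\<in>{0..}. c * T x t)"
      unfolding directional_inf_def T_def by simp
    then show "directional_inf q y (\<lambda>i. c * x i) = c * directional_inf q y x"
      unfolding directional_inf_def T_def using cINF_mult_pos[OF c _ bdd_below_directional[OF q y x]] by simp
  qed
qed

lemma minimal_sublinear_odd:
  assumes q: "sublinear q"
    and minimal: "\<And>q'. sublinear q' \<Longrightarrow> \<forall>\<phi>\<in>V. q' \<phi> \<le> q \<phi> \<Longrightarrow> \<forall>\<phi>\<in>V. q' \<phi> = q \<phi>"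
    and y: "y \<in> V"
  shows "q (\<lambda>i. - y i) = - q y"
proof -
  have "\<forall>\<phi>\<in>V. directional_inf q y \<phi> \<le> q \<phi>"
    using directional_inf_le[OF q y, of _ 0] by simp
  then have "q (\<lambda>i. - y i) = directional_inf q y (\<lambda>i. - y i)"
    using minimal[OF sublinear_directional_inf[OF q y]] neg_mem[OF y] by simp
  also have "\<dots> \<le> - q y"
    using directional_inf_le[OF q y neg_mem[OF y], of 1] sublinear_zero[OF q] by simp
  finally show ?thesis using sublinear_neg_le[OF q y] by simp
qed

lemma sublinear_chain_lower_bound:
  assumes p: "sublinear p" and C: "\<forall>q\<in>C. sublinear q \<and> (\<forall>\<phi>\<in>V. q \<phi> \<le> p \<phi>)"
    and chain: "\<And>q1 q2. q1 \<in> C \<Longrightarrow> q2 \<in> C \<Longrightarrow> (\<forall>\<phi>\<in>V. q1 \<phi> \<le> q2 \<phi>) \<or> (\<forall>\<phi>\<in>V. q2 \<phi> \<le> q1 \<phi>)"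
  obtains u where "sublinear u" "\<forall>\<phi>\<in>V. u \<phi> \<le> p \<phi>" "\<And>q \<phi>. q \<in> C \<Longrightarrow> \<phi> \<in> V \<Longrightarrow> u \<phi> \<le> q \<phi>"
proof -
  define D where "D = insert p C"
  have sub: "\<forall>q\<in>D. sublinear q" and dom: "\<forall>q\<in>D. \<forall>\<phi>\<in>V. q \<phi> \<le> p \<phi>"
    using p C by (auto simp: D_def)
  have "(\<forall>\<phi>\<in>V. q1 \<phi> \<le> q2 \<phi>) \<or> (\<forall>\<phi>\<in>V. q2 \<phi> \<le> q1 \<phi>)" if "q1 \<in> D" "q2 \<in> D" for q1 q2
    using that chain dom by (auto simp: D_def)
  then have "sublinear (\<lambda>\<phi>. INF q\<in>D. q \<phi>)"
    using sublinear_INF_chain[OF _ sub dom] by (simp add: D_def)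
  moreover have "(INF q\<in>D. q \<phi>) \<le> q \<phi>" if "q \<in> D" "\<phi> \<in> V" for q \<phi>
    using cINF_lower[OF bdd_below_dominated[OF sub dom that(2)] that(1)] .
  ultimately show thesis
    using that by (simp add: D_def)
qed

lemma exists_minimal_sublinear_below:
  assumes p: "sublinear p"
  obtains m where "sublinear m" "\<forall>\<phi>\<in>V. m \<phi> \<le> p \<phi>"
    "\<And>q. sublinear q \<Longrightarrow> \<forall>\<phi>\<in>V. q \<phi> \<le> m \<phi> \<Longrightarrow> \<forall>\<phi>\<in>V. q \<phi> = m \<phi>"
proof -
  \<comment> \<open>Zorn's lemma is applied to functionals restricted to V, on which the order is antisymmetric\<close>
  define A where "A = {q \<in> extensional V. sublinear q \<and> (\<forall>\<phi>\<in>V. q \<phi> \<le> p \<phi>)}"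
  define R :: "(('i \<Rightarrow> real) \<Rightarrow> real) \<Rightarrow> (('i \<Rightarrow> real) \<Rightarrow> real) \<Rightarrow> bool"
    where "R a b \<longleftrightarrow> (\<forall>\<phi>\<in>V. b \<phi> \<le> a \<phi>)" for a b
  have restrict_A: "restrict q V \<in> A" if "sublinear q" "\<forall>\<phi>\<in>V. q \<phi> \<le> p \<phi>" for q
    using that sublinear_cong[of q "restrict q V"] by (simp add: A_def)
  have "partial_order_on A (relation_of R A)"
    unfolding partial_order_on_def preorder_on_def refl_on_def trans_on_def antisym_on_def
      relation_of_def R_def A_def
    by (auto intro: order_trans) (rule extensionalityI[of _ V], auto intro: order.antisym)
  moreover have "\<exists>u\<in>A. \<forall>a\<in>C. R a u" if C: "C \<in> Chains (relation_of R A)" for C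
  proof -
    have CA: "C \<subseteq> A" using C by (auto simp: Chains_def relation_of_def)
    have "\<forall>q\<in>C. sublinear q \<and> (\<forall>\<phi>\<in>V. q \<phi> \<le> p \<phi>)" using CA by (auto simp: A_def)
    moreover have "(\<forall>\<phi>\<in>V. q1 \<phi> \<le> q2 \<phi>) \<or> (\<forall>\<phi>\<in>V. q2 \<phi> \<le> q1 \<phi>)" if "q1 \<in> C" "q2 \<in> C" for q1 q2
      using C that by (auto simp: Chains_def relation_of_def R_def)
    ultimately obtain u where "sublinear u" "\<forall>\<phi>\<in>V. u \<phi> \<le> p \<phi>"
      "\<And>q \<phi>. q \<in> C \<Longrightarrow> \<phi> \<in> V \<Longrightarrow> u \<phi> \<le> q \<phi>"
      using sublinear_chain_lower_bound[OF p] by blast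
    then have "restrict u V \<in> A" "\<forall>a\<in>C. R a (restrict u V)"
      using restrict_A by (auto simp: R_def)
    then show ?thesis by blast
  qed
  ultimately obtain m where m: "m \<in> A" and max: "\<forall>a\<in>A. R m a \<longrightarrow> a = m"
    using predicate_Zorn by blast
  show thesis
  proof
    show "sublinear m" "\<forall>\<phi>\<in>V. m \<phi> \<le> p \<phi>" using m by (auto simp: A_def)
    fix q assume q: "sublinear q" "\<forall>\<phi>\<in>V. q \<phi> \<le> m \<phi>"
    then have "restrict q V \<in> A"
      using m restrict_A[OF q(1)] by (fastforce simp: A_def)
    moreover have "R m (restrict q V)" using q(2) by (simp add: R_def)
    ultimately have "restrict q V = m" using max by blast
    then show "\<forall>\<phi>\<in>V. q \<phi> = m \<phi>" by (metis restrict_apply')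
  qed
qed

theorem linear_functional_below_sublinear:
  assumes "sublinear p"
  obtains \<Phi> where "linear_functional \<Phi>" "\<forall>\<phi>\<in>V. \<Phi> \<phi> \<le> p \<phi>"
proof -
  obtain m where m: "sublinear m" "\<forall>\<phi>\<in>V. m \<phi> \<le> p \<phi>"
    and minimal: "\<And>q. sublinear q \<Longrightarrow> \<forall>\<phi>\<in>V. q \<phi> \<le> m \<phi> \<Longrightarrow> \<forall>\<phi>\<in>V. q \<phi> = m \<phi>"
    using exists_minimal_sublinear_below[OF assms] by blast
  have "linear_functional m"
    using odd_sublinear_imp_linear[OF m(1) minimal_sublinear_odd[OF m(1) minimal]] .
  with m(2) show thesis using that by blast
qed

end

lemma linf_iff: "\<phi> \<in> linf \<longleftrightarrow> (\<exists>B. \<forall>i. \<bar>\<phi> i\<bar> \<le> B)"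
  unfolding linf_def bounded_iff by auto

interpretation linf: function_subspace linf
proof
  show "(\<lambda>i. 0) \<in> linf" by (auto simp: linf_iff)
next
  fix \<phi> \<psi> :: "'i \<Rightarrow> real" assume "\<phi> \<in> linf" "\<psi> \<in> linf"
  then obtain A B where "\<forall>i. \<bar>\<phi> i\<bar> \<le> A" "\<forall>i. \<bar>\<psi> i\<bar> \<le> B" by (auto simp: linf_iff)
  then have "\<bar>\<phi> i + \<psi> i\<bar> \<le> A + B" for i by (meson abs_triangle_ineq add_mono order_trans)
  then show "(\<lambda>i. \<phi> i + \<psi> i) \<in> linf" by (auto simp: linf_iff)
next
  fix \<phi> :: "'i \<Rightarrow> real" and c assume "\<phi> \<in> linf"
  then obtain B where "\<forall>i. \<bar>\<phi> i\<bar> \<le> B" by (auto simp: linf_iff)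
  then have "\<forall>i. \<bar>c * \<phi> i\<bar> \<le> \<bar>c\<bar> * B" by (simp add: abs_mult mult_left_mono)
  then show "(\<lambda>i. c * \<phi> i) \<in> linf" by (auto simp: linf_iff)
qed

lemma linf_const: "(\<lambda>i. c) \<in> linf"
  by (auto simp: linf_iff)

lemma bdd_above_linf: "\<phi> \<in> linf \<Longrightarrow> bdd_above (range \<phi>)"
  by (auto simp: linf_iff abs_le_iff intro: bdd_aboveI2)

lemma linf_le_SUP: "\<phi> \<in> linf \<Longrightarrow> \<phi> i \<le> (SUP i. \<phi> i)"
  by (rule cSUP_upper[OF UNIV_I bdd_above_linf])

lemma ereal_SUP_linf:
  assumes "\<phi> \<in> linf" shows "(SUP i. ereal (\<phi> i)) = ereal (SUP i. \<phi> i)"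
proof (rule ereal_SUP[symmetric])
  have "ereal (\<phi> i) \<le> (SUP i. ereal (\<phi> i))" for i by (rule SUP_upper) simp
  moreover have "(SUP i. ereal (\<phi> i)) \<le> ereal (SUP i. \<phi> i)"
    using linf_le_SUP[OF assms] by (intro SUP_least) simp
  ultimately show "\<bar>SUP i. ereal (\<phi> i)\<bar> \<noteq> \<infinity>" by force
qed

lemma sublinear_SUP: "linf.sublinear (\<lambda>\<phi>. SUP i. \<phi> i)"
  unfolding linf.sublinear_def
proof (intro conjI ballI allI impI)
  fix \<phi> \<psi> :: "'i \<Rightarrow> real" assume "\<phi> \<in> linf" "\<psi> \<in> linf"
  then show "(SUP i. \<phi> i + \<psi> i) \<le> (SUP i. \<phi> i) + (SUP i. \<psi> i)"
    by (intro cSUP_least add_mono linf_le_SUP) auto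
next
  fix \<phi> :: "'i \<Rightarrow> real" and c :: real assume "\<phi> \<in> linf" "0 < c"
  then show "(SUP i. c * \<phi> i) = c * (SUP i. \<phi> i)"
    by (intro cSUP_mult_pos bdd_above_linf) auto
qed

lemma Delta_L_I:
  assumes "linf.linear_functional \<Phi>" "\<And>\<phi>. \<phi> \<in> linf \<Longrightarrow> \<Phi> \<phi> \<le> (SUP i. \<phi> i)"
  shows "\<Phi> \<in> Delta_L"
  unfolding Delta_L_def linf_dual_def
proof (intro CollectI conjI ballI exI[of _ 1] allI)
  show "\<Phi> (\<lambda>i. a * \<phi> i + b * \<psi> i) = a * \<Phi> \<phi> + b * \<Phi> \<psi>" if "\<phi> \<in> linf" "\<psi> \<in> linf" for \<phi> \<psi> a b
    using assms(1) that by (simp add: linf.linear_functional_def)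
  fix \<phi> :: "'a \<Rightarrow> real" assume \<phi>: "\<phi> \<in> linf"
  have abs: "(\<lambda>i. \<bar>\<phi> i\<bar>) \<in> linf" using \<phi> by (simp add: linf_iff)
  have "\<phi> i \<le> (SUP i. \<bar>\<phi> i\<bar>)" "- \<phi> i \<le> (SUP i. \<bar>\<phi> i\<bar>)" for i
    using linf_le_SUP[OF abs, of i] by auto
  then have "(SUP i. \<phi> i) \<le> (SUP i. \<bar>\<phi> i\<bar>)" "(SUP i. - \<phi> i) \<le> (SUP i. \<bar>\<phi> i\<bar>)"
    by (auto intro: cSUP_least)
  moreover have "\<Phi> (\<lambda>i. - \<phi> i) = - \<Phi> \<phi>"
    using linf.linear_functional_scale[OF assms(1) \<phi>, of "-1"] by simp
  ultimately have "\<Phi> \<phi> \<le> (SUP i. \<bar>\<phi> i\<bar>)" "- \<Phi> \<phi> \<le> (SUP i. \<bar>\<phi> i\<bar>)"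
    using assms(2)[OF \<phi>] assms(2)[OF linf.neg_mem[OF \<phi>]] by linarith+
  then show "\<bar>\<Phi> \<phi>\<bar> \<le> 1 * (SUP i. \<bar>\<phi> i\<bar>)" by linarith
  show "\<Phi> \<phi> \<le> (SUP i. \<phi> i)" using assms(2)[OF \<phi>] .
qed

lemma Delta_L_const:
  assumes "linf.linear_functional \<Phi>" "\<And>\<phi>. \<phi> \<in> linf \<Longrightarrow> \<Phi> \<phi> \<le> (SUP i. \<phi> i)"
  shows "\<Phi> (\<lambda>i. c) = c"
proof -
  have "\<Phi> (\<lambda>i. - c) = - \<Phi> (\<lambda>i. c)"
    using linf.linear_functional_scale[OF assms(1) linf_const[of c], of "-1"] by simp
  then show ?thesis
    using assms(2)[OF linf_const[of c]] assms(2)[OF linf_const[of "- c"]] by simp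
qed

inductive_set nonneg_combinations :: "('i \<Rightarrow> 'x \<Rightarrow> real) \<Rightarrow> ('i \<Rightarrow> real) set"
  for g :: "'i \<Rightarrow> 'x \<Rightarrow> real" where
  zero: "(\<lambda>i. 0) \<in> nonneg_combinations g"
| add_generator: "k \<in> nonneg_combinations g \<Longrightarrow> 0 \<le> c \<Longrightarrow> (\<lambda>i. k i + c * g i x) \<in> nonneg_combinations g"

lemma generator_in_nonneg_combinations: "(\<lambda>i. g i x) \<in> nonneg_combinations g"
  using nonneg_combinations.add_generator[OF nonneg_combinations.zero, of 1] by simp

lemma nonneg_combinations_scale:
  "k \<in> nonneg_combinations g \<Longrightarrow> 0 \<le> a \<Longrightarrow> (\<lambda>i. a * k i) \<in> nonneg_combinations g"
proof (induction rule: nonneg_combinations.induct)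
  case (add_generator k c x)
  then show ?case
    using nonneg_combinations.add_generator[of "\<lambda>i. a * k i" g "a * c" x]
    by (simp add: distrib_left mult.assoc)
qed (simp add: nonneg_combinations.zero)

lemma nonneg_combinations_add:
  "k' \<in> nonneg_combinations g \<Longrightarrow> k \<in> nonneg_combinations g \<Longrightarrow> (\<lambda>i. k i + k' i) \<in> nonneg_combinations g"
proof (induction rule: nonneg_combinations.induct)
  case (add_generator k' c x)
  then show ?case
    using nonneg_combinations.add_generator[of "\<lambda>i. k i + k' i" g c x] by (simp add: add.assoc)
qed simp

lemma nonneg_combinations_linf:
  "k \<in> nonneg_combinations g \<Longrightarrow> (\<And>x. (\<lambda>i. g i x) \<in> linf) \<Longrightarrow> k \<in> linf"
  by (induction rule: nonneg_combinations.induct) (simp_all add: linf.zero_mem linf.add_mem linf.scale_mem)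

lemma nonneg_combinations_finite_sum:
  assumes "k \<in> nonneg_combinations g"
  shows "\<exists>(m::nat) c xs. (\<forall>j<m. 0 \<le> c j) \<and> k = (\<lambda>i. \<Sum>j<m. c j * g i (xs j))"
  using assms
proof (induction rule: nonneg_combinations.induct)
  case zero
  show ?case by (intro exI[of _ "0::nat"]) simp
next
  case (add_generator k d x)
  obtain m :: nat and c xs where c: "\<forall>j<m. 0 \<le> c j" and k: "k = (\<lambda>i. \<Sum>j<m. c j * g i (xs j))"
    using add_generator.IH by blast
  have "(\<Sum>j<m. (c(m := d)) j * g i ((xs(m := x)) j)) = (\<Sum>j<m. c j * g i (xs j))" for i
    by (rule sum.cong) auto
  then have "(\<lambda>i. k i + d * g i x) = (\<lambda>i. \<Sum>j<Suc m. (c(m := d)) j * g i ((xs(m := x)) j))"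
    unfolding k by simp
  moreover have "\<forall>j<Suc m. 0 \<le> (c(m := d)) j"
    using c add_generator.hyps(2) by (simp add: less_Suc_eq)
  ultimately show ?case by (intro exI[of _ "Suc m"] exI[of _ "c(m := d)"] exI[of _ "xs(m := x)"]) simp
qed

lemma nonneg_combinations_SUP_nonneg:
  assumes conv: "infsup_convex g" and g_linf: "\<And>x. (\<lambda>i. g i x) \<in> linf"
    and g_sup: "\<And>x. 0 \<le> (SUP i. g i x)" and k: "k \<in> nonneg_combinations g"
  shows "0 \<le> (SUP i. k i)"
proof -
  obtain m :: nat and c xs where c: "\<forall>j<m. 0 \<le> c j" and k_sum: "k = (\<lambda>i. \<Sum>j<m. c j * g i (xs j))"
    using nonneg_combinations_finite_sum[OF k] by blast
  have k_linf: "k \<in> linf" using nonneg_combinations_linf[OF k g_linf] .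
  define s where "s = (\<Sum>j<m. c j)"
  show ?thesis
  proof (cases "s = 0")
    case True
    then have "\<forall>j<m. c j = 0" using c sum_nonneg_eq_0_iff[of "{..<m}" c] by (simp add: s_def)
    then have "k = (\<lambda>i. 0)" by (simp add: k_sum)
    then show ?thesis by simp
  next
    case False
    moreover have "0 \<le> s" unfolding s_def using c by (intro sum_nonneg) simp
    ultimately have s: "0 < s" by simp
    have m: "m \<ge> 1" using False by (cases m) (auto simp: s_def)
    have t: "(\<lambda>j. c j / s) \<in> std_simplex m"
      using c s by (simp add: std_simplex_def s_def flip: sum_divide_distrib)
    have "0 \<le> (INF x. SUP i. ereal (g i x))"
      using g_sup by (simp add: ereal_SUP_linf[OF g_linf] INF_greatest)
    also have "\<dots> \<le> (SUP i. ereal (\<Sum>j<m. c j / s * g i (xs j)))"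
      using conv[unfolded infsup_convex_def, rule_format, OF m t, of xs] by simp
    also have "\<dots> = (SUP i. ereal ((1 / s) * k i))"
      by (simp add: k_sum sum_distrib_left)
    also have "\<dots> = ereal (SUP i. (1 / s) * k i)"
      by (rule ereal_SUP_linf[OF linf.scale_mem[OF k_linf]])
    also have "(SUP i. (1 / s) * k i) = (1 / s) * (SUP i. k i)"
      using s by (intro cSUP_mult_pos bdd_above_linf[OF k_linf]) auto
    finally show ?thesis using s by (simp add: zero_le_divide_iff)
  qed
qed

definition cone_sup :: "('i \<Rightarrow> 'x \<Rightarrow> real) \<Rightarrow> ('i \<Rightarrow> real) \<Rightarrow> real" where
  "cone_sup g \<phi> = (INF k\<in>nonneg_combinations g. SUP i. \<phi> i + k i)"

lemma bdd_below_cone_sup: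
  assumes g_linf: "\<And>x. (\<lambda>i. g i x) \<in> linf"
    and cone_sup_nonneg: "\<And>k. k \<in> nonneg_combinations g \<Longrightarrow> 0 \<le> (SUP i. k i)"
    and \<phi>: "\<phi> \<in> linf"
  shows "bdd_below ((\<lambda>k. SUP i. \<phi> i + k i) ` nonneg_combinations g)"
proof (rule bdd_belowI2)
  fix k assume k: "k \<in> nonneg_combinations g"
  have "(\<lambda>i. (\<phi> i + k i) + - \<phi> i) = k" by simp
  then have "(SUP i. k i) \<le> (SUP i. \<phi> i + k i) + (SUP i. - \<phi> i)"
    using linf.sublinear_add[OF sublinear_SUP linf.add_mem[OF \<phi> nonneg_combinations_linf[OF k g_linf]]
        linf.neg_mem[OF \<phi>]] by simp
  then show "- (SUP i. - \<phi> i) \<le> (SUP i. \<phi> i + k i)"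
    using cone_sup_nonneg[OF k] by simp
qed

lemma cone_sup_le:
  assumes "\<And>x. (\<lambda>i. g i x) \<in> linf" "\<And>k. k \<in> nonneg_combinations g \<Longrightarrow> 0 \<le> (SUP i. k i)"
    and "\<phi> \<in> linf" "k \<in> nonneg_combinations g"
  shows "cone_sup g \<phi> \<le> (SUP i. \<phi> i + k i)"
  unfolding cone_sup_def by (rule cINF_lower[OF bdd_below_cone_sup[OF assms(1-3)] assms(4)])

lemma sublinear_cone_sup:
  fixes g :: "'i \<Rightarrow> 'x \<Rightarrow> real"
  assumes g_linf: "\<And>x. (\<lambda>i. g i x) \<in> linf"
    and cone_sup_nonneg: "\<And>k. k \<in> nonneg_combinations g \<Longrightarrow> 0 \<le> (SUP i. k i)"
  shows "linf.sublinear (cone_sup g)"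
proof -
  have K_linf: "k \<in> linf" if "k \<in> nonneg_combinations g" for k
    using nonneg_combinations_linf[OF that g_linf] .
  have K_ne: "nonneg_combinations g \<noteq> {}" using nonneg_combinations.zero by blast
  show ?thesis
    unfolding linf.sublinear_def
  proof (intro conjI ballI allI impI)
    fix \<phi> \<psi> :: "'i \<Rightarrow> real" assume \<phi>: "\<phi> \<in> linf" and \<psi>: "\<psi> \<in> linf"
    have "cone_sup g (\<lambda>i. \<phi> i + \<psi> i) \<le> (SUP i. \<phi> i + k1 i) + (SUP i. \<psi> i + k2 i)"
      if k1: "k1 \<in> nonneg_combinations g" and k2: "k2 \<in> nonneg_combinations g" for k1 k2
    proof -
      have "cone_sup g (\<lambda>i. \<phi> i + \<psi> i) \<le> (SUP i. (\<phi> i + \<psi> i) + (k1 i + k2 i))"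
        using cone_sup_le[OF g_linf cone_sup_nonneg linf.add_mem[OF \<phi> \<psi>] nonneg_combinations_add[OF k2 k1]] .
      also have "(\<lambda>i. (\<phi> i + \<psi> i) + (k1 i + k2 i)) = (\<lambda>i. (\<phi> i + k1 i) + (\<psi> i + k2 i))"
        by (simp add: algebra_simps)
      also have "(SUP i. (\<phi> i + k1 i) + (\<psi> i + k2 i)) \<le> (SUP i. \<phi> i + k1 i) + (SUP i. \<psi> i + k2 i)"
        using linf.sublinear_add[OF sublinear_SUP linf.add_mem[OF \<phi> K_linf[OF k1]]
            linf.add_mem[OF \<psi> K_linf[OF k2]]] .
      finally show ?thesis .
    qed
    then show "cone_sup g (\<lambda>i. \<phi> i + \<psi> i) \<le> cone_sup g \<phi> + cone_sup g \<psi>"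
      unfolding cone_sup_def[of g \<phi>] cone_sup_def[of g \<psi>] by (rule cINF_add_greatest[OF K_ne K_ne])
  next
    fix \<phi> :: "'i \<Rightarrow> real" and c :: real assume \<phi>: "\<phi> \<in> linf" and c: "0 < c"
    have "(\<lambda>k i. c * k i) ` nonneg_combinations g = nonneg_combinations g"
    proof
      show "(\<lambda>k i. c * k i) ` nonneg_combinations g \<subseteq> nonneg_combinations g"
        using c by (auto intro: nonneg_combinations_scale)
      show "nonneg_combinations g \<subseteq> (\<lambda>k i. c * k i) ` nonneg_combinations g"
      proof
        fix k assume "k \<in> nonneg_combinations g"
        have "k = (\<lambda>i. c * ((1 / c) * k i))" using c by simp
        moreover have "(\<lambda>i. (1 / c) * k i) \<in> nonneg_combinations g"
          using \<open>k \<in> nonneg_combinations g\<close> c by (intro nonneg_combinations_scale) simp_all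
        ultimately show "k \<in> (\<lambda>k i. c * k i) ` nonneg_combinations g" by (rule image_eqI)
      qed
    qed
    then have "cone_sup g (\<lambda>i. c * \<phi> i) = (INF k\<in>(\<lambda>k i. c * k i) ` nonneg_combinations g. SUP i. c * \<phi> i + k i)"
      by (simp add: cone_sup_def)
    also have "\<dots> = (INF k\<in>nonneg_combinations g. SUP i. c * \<phi> i + c * k i)"
      by (simp add: image_image)
    also have "\<dots> = (INF k\<in>nonneg_combinations g. c * (SUP i. \<phi> i + k i))"
    proof (rule INF_cong[OF refl])
      fix k assume "k \<in> nonneg_combinations g"
      then have "(SUP i. c * (\<phi> i + k i)) = c * (SUP i. \<phi> i + k i)"
        using linf.sublinear_pos_hom[OF sublinear_SUP linf.add_mem[OF \<phi> K_linf] c] by simp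
      then show "(SUP i. c * \<phi> i + c * k i) = c * (SUP i. \<phi> i + k i)"
        by (simp add: distrib_left)
    qed
    also have "\<dots> = c * cone_sup g \<phi>"
      unfolding cone_sup_def by (rule cINF_mult_pos[OF c K_ne bdd_below_cone_sup[OF g_linf cone_sup_nonneg \<phi>]])
    finally show "cone_sup g (\<lambda>i. c * \<phi> i) = c * cone_sup g \<phi>" .
  qed
qed

lemma cone_sup_le_SUP:
  assumes "\<And>x. (\<lambda>i. g i x) \<in> linf" "\<And>k. k \<in> nonneg_combinations g \<Longrightarrow> 0 \<le> (SUP i. k i)"
    and "\<phi> \<in> linf"
  shows "cone_sup g \<phi> \<le> (SUP i. \<phi> i)"
  using cone_sup_le[OF assms nonneg_combinations.zero] by simp

lemma generator_nonneg_below_cone_sup: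
  assumes g_linf: "\<And>x. (\<lambda>i. g i x) \<in> linf"
    and cone_nonneg: "\<And>k. k \<in> nonneg_combinations g \<Longrightarrow> 0 \<le> (SUP i. k i)"
    and \<Phi>: "linf.linear_functional \<Phi>" and \<Phi>_le: "\<And>\<phi>. \<phi> \<in> linf \<Longrightarrow> \<Phi> \<phi> \<le> cone_sup g \<phi>"
  shows "0 \<le> \<Phi> (\<lambda>i. g i x)"
proof -
  have "- \<Phi> (\<lambda>i. g i x) = \<Phi> (\<lambda>i. - g i x)"
    using linf.linear_functional_scale[OF \<Phi> g_linf, of "-1"] by simp
  also have "\<dots> \<le> cone_sup g (\<lambda>i. - g i x)"
    using \<Phi>_le[OF linf.neg_mem[OF g_linf]] .
  also have "\<dots> \<le> (SUP i. - g i x + g i x)"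
    by (rule cone_sup_le[OF g_linf cone_nonneg linf.neg_mem[OF g_linf] generator_in_nonneg_combinations])
  finally show ?thesis by simp
qed

theorem theorem3p1:
  fixes f :: "'x \<Rightarrow> real" and F :: "'l \<Rightarrow> 'x \<Rightarrow> real"
  assumes "infsup_convex (\<lambda>l x. F l x - f x)"
    and "\<And>x. (\<lambda>l. F l x) \<in> linf"
    and "\<And>x. f x \<le> (SUP l. F l x)"
  shows "\<exists>\<Phi>\<in>Delta_L. \<forall>x. f x \<le> \<Phi> (\<lambda>l. F l x)"
proof -
  define g where "g l x = F l x - f x" for l x
  have g_linf: "(\<lambda>l. g l x) \<in> linf" for x
    unfolding g_def using linf.add_mem[OF assms(2) linf_const[of "- f x"]] by simp
  have "F l x \<le> (SUP l. g l x) + f x" for l x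
    using linf_le_SUP[OF g_linf[of x], of l] by (simp add: g_def)
  then have F_le: "(SUP l. F l x) \<le> (SUP l. g l x) + f x" for x
    by (intro cSUP_least) auto
  have g_sup: "0 \<le> (SUP l. g l x)" for x
    using F_le[of x] assms(3)[of x] by linarith
  note cone_nonneg = nonneg_combinations_SUP_nonneg[OF assms(1)[folded g_def] g_linf g_sup]
  obtain \<Phi> where \<Phi>: "linf.linear_functional \<Phi>" and \<Phi>_le: "\<forall>\<phi>\<in>linf. \<Phi> \<phi> \<le> cone_sup g \<phi>"
    using linf.linear_functional_below_sublinear[OF sublinear_cone_sup[OF g_linf cone_nonneg]] .
  have \<Phi>_le_SUP: "\<Phi> \<phi> \<le> (SUP l. \<phi> l)" if "\<phi> \<in> linf" for \<phi>
    using \<Phi>_le cone_sup_le_SUP[OF g_linf cone_nonneg that] that by force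
  have "f x \<le> \<Phi> (\<lambda>l. F l x)" for x
  proof -
    have "\<Phi> (\<lambda>l. g l x) = \<Phi> (\<lambda>l. F l x) - f x"
      using linf.linear_functional_add[OF \<Phi> assms(2) linf_const[of "- f x"]]
        Delta_L_const[OF \<Phi> \<Phi>_le_SUP] by (simp add: g_def)
    then show ?thesis
      using generator_nonneg_below_cone_sup[OF g_linf cone_nonneg \<Phi> \<Phi>_le[rule_format], where x=x]
      by simp
  qed
  then show ?thesis using Delta_L_I[OF \<Phi> \<Phi>_le_SUP] by blast
qed

end
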